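(* Let $G=(V,E)$ be a graph. If $|V|=1$, the single vertex of $G$ is a forced codeword. If $|V|\ge 2$, then a vertex $u\in V$ is a forced codeword if and only if there exists a vertex $v\in V$ with $v\ne u$ and $N(u)\subseteq N[v]$.
   Context: All graphs are finite, simple and undirected (not necessarily connected). For $u\in V$, $N(u)$ is the set of neighbours of $u$ and $N[u]=N(u)\cup\{u\}$. A code is a non-empty subset $C\subseteq V$. For $u\in V$, $I(C;u)=N[u]\cap C$. A code $C$ is self-locating-dominating if for every $u\in V\setminus C$ we have $I(C;u)\neq\emptyset$ and $\bigcap_{c\in I(C;u)}N[c]=\{u\}$. A vertex $u$ is a forced codeword if $u$ belongs to every self-locating-dominating code of $G$. *)

theory Defs
  imports Main
begin

definition graph :: "'a set \<Rightarrow> ('a \<Rightarrow> 'a \<Rightarrow> bool) \<Rightarrow> bool" where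
  "graph V E \<longleftrightarrow> finite V \<and> (\<forall>x y. E x y \<longrightarrow> x \<in> V \<and> y \<in> V)
     \<and> (\<forall>x. \<not> E x x) \<and> (\<forall>x y. E x y \<longrightarrow> E y x)"

definition nbh :: "'a set \<Rightarrow> ('a \<Rightarrow> 'a \<Rightarrow> bool) \<Rightarrow> 'a \<Rightarrow> 'a set" where
  "nbh V E u = {v \<in> V. E u v}"

definition cnbh :: "'a set \<Rightarrow> ('a \<Rightarrow> 'a \<Rightarrow> bool) \<Rightarrow> 'a \<Rightarrow> 'a set" where
  "cnbh V E u = insert u (nbh V E u)"

definition I_set :: "'a set \<Rightarrow> ('a \<Rightarrow> 'a \<Rightarrow> bool) \<Rightarrow> 'a set \<Rightarrow> 'a \<Rightarrow> 'a set" where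
  "I_set V E C u = cnbh V E u \<inter> C"

definition self_loc_dom :: "'a set \<Rightarrow> ('a \<Rightarrow> 'a \<Rightarrow> bool) \<Rightarrow> 'a set \<Rightarrow> bool" where
  "self_loc_dom V E C \<longleftrightarrow> C \<noteq> {} \<and> C \<subseteq> V \<and>
     (\<forall>u \<in> V - C. I_set V E C u \<noteq> {} \<and>
        (\<Inter>c \<in> I_set V E C u. cnbh V E c) = {u})"

definition forced_codeword :: "'a set \<Rightarrow> ('a \<Rightarrow> 'a \<Rightarrow> bool) \<Rightarrow> 'a \<Rightarrow> bool" where
  "forced_codeword V E u \<longleftrightarrow> (\<forall>C. self_loc_dom V E C \<longrightarrow> u \<in> C)"

end

theory Submission
  imports Defs
begin

text \<open>Self-locating-dominating codes are closed under enlargement, so \<open>u\<close> is forced exactly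
  when \<open>V - {u}\<close> fails to be one. For that code \<open>I(C;u) = N(u)\<close>, and a vertex \<open>v\<close> lies in
  \<open>\<Inter>c\<in>N(u). N[c]\<close> iff \<open>N(u) \<subseteq> N[v]\<close>; so the condition at \<open>u\<close> fails iff some \<open>v \<noteq> u\<close>
  has \<open>N(u) \<subseteq> N[v]\<close>.\<close>

lemma cnbh_sym:
  assumes "graph V E" "x \<in> V" "y \<in> V"
  shows "x \<in> cnbh V E y \<longleftrightarrow> y \<in> cnbh V E x"
  using assms unfolding graph_def cnbh_def nbh_def by blast

lemma cnbh_subset: "u \<in> V \<Longrightarrow> cnbh V E u \<subseteq> V"
  unfolding cnbh_def nbh_def by auto

lemma mem_Inter_cnbh_iff:
  assumes "graph V E" "A \<subseteq> V" "v \<in> V"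
  shows "v \<in> (\<Inter>c\<in>A. cnbh V E c) \<longleftrightarrow> A \<subseteq> cnbh V E v"
proof -
  have "c \<in> A \<Longrightarrow> v \<in> cnbh V E c \<longleftrightarrow> c \<in> cnbh V E v" for c
    using assms cnbh_sym[OF assms(1) _ assms(3), of c] by blast
  then show ?thesis by blast
qed

lemma self_mem_Inter_cnbh_I_set:
  assumes "graph V E" "C \<subseteq> V" "u \<in> V"
  shows "u \<in> (\<Inter>c\<in>I_set V E C u. cnbh V E c)"
proof
  fix c assume "c \<in> I_set V E C u"
  then have "c \<in> V" "c \<in> cnbh V E u" using assms(2) unfolding I_set_def by auto
  then show "u \<in> cnbh V E c" using cnbh_sym[OF assms(1) assms(3)] by blast
qed

lemma self_loc_dom_mono:
  assumes g: "graph V E" and C: "self_loc_dom V E C" and "C \<subseteq> D" "D \<subseteq> V"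
  shows "self_loc_dom V E D"
  unfolding self_loc_dom_def
proof (intro conjI ballI)
  show "D \<noteq> {}" "D \<subseteq> V" using C \<open>C \<subseteq> D\<close> \<open>D \<subseteq> V\<close> unfolding self_loc_dom_def by auto
  fix x assume x: "x \<in> V - D"
  then have "x \<in> V - C" using \<open>C \<subseteq> D\<close> by auto
  with C have ne: "I_set V E C x \<noteq> {}" and eq: "(\<Inter>c\<in>I_set V E C x. cnbh V E c) = {x}"
    unfolding self_loc_dom_def by auto
  have mono: "I_set V E C x \<subseteq> I_set V E D x"
    using \<open>C \<subseteq> D\<close> unfolding I_set_def by auto
  show "I_set V E D x \<noteq> {}" using ne mono by blast
  have "(\<Inter>c\<in>I_set V E D x. cnbh V E c) \<subseteq> {x}" using eq mono by blast
  moreover have "x \<in> (\<Inter>c\<in>I_set V E D x. cnbh V E c)"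
    using self_mem_Inter_cnbh_I_set[OF g \<open>D \<subseteq> V\<close>] x by blast
  ultimately show "(\<Inter>c\<in>I_set V E D x. cnbh V E c) = {x}" by blast
qed

lemma forced_codeword_iff_not_self_loc_dom_Diff:
  assumes g: "graph V E" and "V - {u} \<noteq> {}"
  shows "forced_codeword V E u \<longleftrightarrow> \<not> self_loc_dom V E (V - {u})"
proof
  assume "forced_codeword V E u"
  then show "\<not> self_loc_dom V E (V - {u})" unfolding forced_codeword_def by blast
next
  assume not_sld: "\<not> self_loc_dom V E (V - {u})"
  show "forced_codeword V E u"
    unfolding forced_codeword_def
  proof (intro allI impI)
    fix C assume C: "self_loc_dom V E C"
    then have "C \<subseteq> V" unfolding self_loc_dom_def by blast
    show "u \<in> C"
      using self_loc_dom_mono[OF g C, of "V - {u}"] not_sld \<open>C \<subseteq> V\<close> by blast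
  qed
qed

lemma self_loc_dom_Diff_iff:
  assumes g: "graph V E" and u: "u \<in> V" and nonempty: "V - {u} \<noteq> {}"
  shows "self_loc_dom V E (V - {u}) \<longleftrightarrow> \<not> (\<exists>v \<in> V. v \<noteq> u \<and> nbh V E u \<subseteq> cnbh V E v)"
    (is "_ \<longleftrightarrow> \<not> ?dominated")
proof -
  have I: "I_set V E (V - {u}) u = nbh V E u"
    using g unfolding I_set_def cnbh_def nbh_def graph_def by auto
  have N: "nbh V E u \<subseteq> V" unfolding nbh_def by auto
  have V_Diff: "V - (V - {u}) = {u}" using u by blast
  have "self_loc_dom V E (V - {u}) \<longleftrightarrow>
      nbh V E u \<noteq> {} \<and> (\<Inter>c\<in>nbh V E u. cnbh V E c) = {u}"
    using nonempty unfolding self_loc_dom_def V_Diff by (simp add: I)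
  also have "\<dots> \<longleftrightarrow> \<not> ?dominated"
  proof
    assume "nbh V E u \<noteq> {} \<and> (\<Inter>c\<in>nbh V E u. cnbh V E c) = {u}"
    then show "\<not> ?dominated" using mem_Inter_cnbh_iff[OF g N] by auto
  next
    assume not_dom: "\<not> ?dominated"
    then have "nbh V E u \<noteq> {}" using nonempty by auto
    moreover have "(\<Inter>c\<in>nbh V E u. cnbh V E c) \<subseteq> {u}"
    proof
      fix y assume y: "y \<in> (\<Inter>c\<in>nbh V E u. cnbh V E c)"
      obtain c where c: "c \<in> nbh V E u" using \<open>nbh V E u \<noteq> {}\<close> by blast
      have "c \<in> V" using c N by blast
      moreover have "y \<in> cnbh V E c" using y c by blast
      ultimately have yV: "y \<in> V" by (rule subsetD[OF cnbh_subset])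
      with y have "nbh V E u \<subseteq> cnbh V E y" using mem_Inter_cnbh_iff[OF g N yV] by simp
      with yV not_dom show "y \<in> {u}" by blast
    qed
    moreover have "u \<in> (\<Inter>c\<in>nbh V E u. cnbh V E c)"
      using self_mem_Inter_cnbh_I_set[OF g _ u, of "V - {u}"] I by auto
    ultimately show "nbh V E u \<noteq> {} \<and> (\<Inter>c\<in>nbh V E u. cnbh V E c) = {u}" by blast
  qed
  finally show ?thesis .
qed

theorem mainTheorem3:
  assumes "graph V E"
  shows "(card V = 1 \<longrightarrow> (\<forall>u \<in> V. forced_codeword V E u))
    \<and> (card V \<ge> 2 \<longrightarrow> (\<forall>u \<in> V. forced_codeword V E u \<longleftrightarrow>
          (\<exists>v \<in> V. v \<noteq> u \<and> nbh V E u \<subseteq> cnbh V E v)))"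
proof (intro conjI impI ballI)
  fix u assume "card V = 1" and "u \<in> V"
  then have "V = {u}" by (metis card_1_singletonE singletonD)
  then show "forced_codeword V E u"
    unfolding forced_codeword_def self_loc_dom_def by auto
next
  fix u assume "card V \<ge> 2" and u: "u \<in> V"
  then have "\<not> V \<subseteq> {u}" using card_mono[of "{u}" V] by auto
  then have "V - {u} \<noteq> {}" by blast
  then show "forced_codeword V E u \<longleftrightarrow> (\<exists>v \<in> V. v \<noteq> u \<and> nbh V E u \<subseteq> cnbh V E v)"
    using forced_codeword_iff_not_self_loc_dom_Diff[OF assms] self_loc_dom_Diff_iff[OF assms u]
    by blast
qed

end
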